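(* Let $X_\Sigma$ be a projective toric variety. For each primitive collection $C$ of $\Sigma$ there is a one-parameter subgroup $\lambda(C)\in\Gamma(G)$ such that for every point $x\in V(x_\rho:\rho\in C)\subset\mathbf C^{\Sigma(1)}$ and every ample divisor $D$ on $X_\Sigma$, the limit $\lim_{t\to0}\lambda(C)(t)\cdot x$ exists and $\langle\chi_D,\lambda(C)\rangle<0$ (i.e. $\lambda(C)$ fails the Hilbert–Mumford criterion for $x$ with respect to $\chi_D$). Moreover, if $\Sigma$ is simplicial, $-\lambda(C)$ is a positive integer multiple of the primitive relation of $C$.
   Context: $\Sigma$ is a complete fan in $N_{\mathbf R}$ ($N$ a lattice) with rays $\Sigma(1)$, primitive ray generators $u_\rho$, torus-invariant divisors $D_\rho$. A primitive collection is a subset $C\subset\Sigma(1)$ not contained in $\sigma(1)$ for any cone $\sigma\in\Sigma$, every proper subset of which is contained in some $\sigma(1)$. $G=\mathrm{Hom}_{\mathbf Z}(\mathrm{Cl}(X_\Sigma),\mathbf C^\times)\subset(\mathbf C^\times)^{\Sigma(1)}$ acts coordinatewise on $\mathbf C^{\Sigma(1)}=\mathrm{Spec}\,\mathbf C[x_\rho:\rho\in\Sigma(1)]$; its one-parameter subgroups are $\Gamma(G)=\{b\in\mathbf Z^{\Sigma(1)}:\sum_\rho b_\rho u_\rho=0\}$ acting by $b(t)\cdot x=(t^{b_\rho}x_\rho)_\rho$, and for a divisor $D=\sum_\rho a_\rho D_\rho$ with associated character $\chi_D$ of $G$, $\langle\chi_D,b\rangle=\sum_\rho a_\rho b_\rho$.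 Primitive relation (for $\Sigma$ simplicial): $u=\sum_{\rho\in C}u_\rho$ lies in the relative interior of a unique cone $\sigma\in\Sigma$, and $u=\sum_{\rho\in\sigma(1)}q_\rho u_\rho$ with unique $q_\rho\in\mathbf Q_{\ge0}$; the primitive relation of $C$ is $r\in\mathbf Q^{\Sigma(1)}$ with $r_\rho=1$ for $\rho\in C\setminus\sigma(1)$, $r_\rho=1-q_\rho$ for $\rho\in C\cap\sigma(1)$, $r_\rho=-q_\rho$ for $\rho\in\sigma(1)\setminus C$, and $r_\rho=0$ otherwise. *)

theory Defs
  imports "HOL-Analysis.Analysis"
begin

text \<open>Lattice N = Z^n, with n given by a finite index type 'n; rays of the fan are indexed
  by a finite type 'r (= Sigma(1)); u :: 'r => int^'n gives the primitive ray generators.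
  A cone of the fan is recorded by its set of rays sigma(1) (a subset of 'r);
  the fan itself is the set F of these ray sets.\<close>

definition ipair :: "int ^ 'n \<Rightarrow> int ^ 'n \<Rightarrow> int" where
  "ipair m v = (\<Sum>i\<in>UNIV. m $ i * v $ i)"

definition realv :: "int ^ 'n \<Rightarrow> real ^ 'n" where
  "realv v = (\<chi> i. real_of_int (v $ i))"

definition cone_gen :: "('r \<Rightarrow> int ^ 'n) \<Rightarrow> 'r set \<Rightarrow> (real ^ 'n) set" where
  "cone_gen u S = {x. \<exists>c. (\<forall>\<rho>\<in>S. c \<rho> \<ge> 0) \<and> x = (\<Sum>\<rho>\<in>S. c \<rho> *\<^sub>R realv (u \<rho>))}"

definition primitive_vec :: "int ^ 'n \<Rightarrow> bool" where
  "primitive_vec v \<longleftrightarrow> v \<noteq> 0 \<and> (\<forall>(k::int) w. v = k *s w \<longrightarrow> k = 1 \<or> k = -1)"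

definition is_fan :: "('r::finite \<Rightarrow> int ^ 'n) \<Rightarrow> 'r set set \<Rightarrow> bool" where
  "is_fan u F \<longleftrightarrow>
     (\<forall>\<rho>. primitive_vec (u \<rho>)) \<and>
     (\<forall>\<rho>. {\<rho>} \<in> F) \<and>
     (\<forall>S\<in>F. cone_gen u S \<inter> uminus ` cone_gen u S = {0}) \<and>
     (\<forall>S\<in>F. \<forall>T\<in>F. cone_gen u T \<subseteq> cone_gen u S \<longrightarrow> T \<subseteq> S) \<and>
     (\<forall>S\<in>F. \<forall>K. K face_of cone_gen u S \<and> K \<noteq> {} \<longrightarrow> (\<exists>T\<in>F. T \<subseteq> S \<and> K = cone_gen u T)) \<and>
     (\<forall>S\<in>F. \<forall>T\<in>F. (cone_gen u S \<inter> cone_gen u T) face_of cone_gen u S \<and>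
                     (cone_gen u S \<inter> cone_gen u T) face_of cone_gen u T)"

definition complete_fan :: "('r::finite \<Rightarrow> int ^ 'n) \<Rightarrow> 'r set set \<Rightarrow> bool" where
  "complete_fan u F \<longleftrightarrow> is_fan u F \<and> (\<Union>S\<in>F. cone_gen u S) = UNIV"

definition simplicial_fan :: "('r::finite \<Rightarrow> int ^ 'n) \<Rightarrow> 'r set set \<Rightarrow> bool" where
  "simplicial_fan u F \<longleftrightarrow> (\<forall>S\<in>F. inj_on (\<lambda>\<rho>. realv (u \<rho>)) S \<and>
                                   independent ((\<lambda>\<rho>. realv (u \<rho>)) ` S))"

text \<open>Ampleness of the torus-invariant divisor D = sum a_rho D_rho on the complete toric
  variety X_Sigma (Cox-Little-Schenck, Thm 6.1.14 / Lemma 6.1.13): D is Cartier, i.e. for each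
  maximal cone sigma there is m_sigma in M with <m_sigma,u_rho> = -a_rho for rho in sigma(1),
  and its support function is strictly convex: <m_sigma,u_rho> > -a_rho for rho not in sigma(1).\<close>
definition ample :: "('r::finite \<Rightarrow> int ^ 'n) \<Rightarrow> 'r set set \<Rightarrow> ('r \<Rightarrow> int) \<Rightarrow> bool" where
  "ample u F a \<longleftrightarrow>
     (\<forall>S\<in>F. interior (cone_gen u S) \<noteq> {} \<longrightarrow>
        (\<exists>m::int ^ 'n. (\<forall>\<rho>\<in>S. ipair m (u \<rho>) = - a \<rho>) \<and>
                       (\<forall>\<rho>. \<rho> \<notin> S \<longrightarrow> ipair m (u \<rho>) > - a \<rho>)))"

definition projective_fan :: "('r::finite \<Rightarrow> int ^ 'n) \<Rightarrow> 'r set set \<Rightarrow> bool" where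
  "projective_fan u F \<longleftrightarrow> complete_fan u F \<and> (\<exists>a. ample u F a)"

definition primitive_collection :: "'r set set \<Rightarrow> 'r set \<Rightarrow> bool" where
  "primitive_collection F C \<longleftrightarrow> (\<forall>S\<in>F. \<not> C \<subseteq> S) \<and> (\<forall>C'. C' \<subset> C \<longrightarrow> (\<exists>S\<in>F. C' \<subseteq> S))"

definition one_param :: "('r::finite \<Rightarrow> int ^ 'n) \<Rightarrow> ('r \<Rightarrow> int) \<Rightarrow> bool" where
  "one_param u b \<longleftrightarrow> (\<Sum>\<rho>\<in>UNIV. b \<rho> *s u \<rho>) = 0"

definition ops_act :: "('r \<Rightarrow> int) \<Rightarrow> complex \<Rightarrow> ('r \<Rightarrow> complex) \<Rightarrow> ('r \<Rightarrow> complex)" where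
  "ops_act b t x = (\<lambda>\<rho>. t powi (b \<rho>) * x \<rho>)"

text \<open>Pairing <chi_D, b> for D = sum a_rho D_rho.\<close>
definition char_pair :: "('r::finite \<Rightarrow> int) \<Rightarrow> ('r \<Rightarrow> int) \<Rightarrow> int" where
  "char_pair a b = (\<Sum>\<rho>\<in>UNIV. a \<rho> * b \<rho>)"

text \<open>Primitive relation of C (simplicial case), as in the paper; rational values are
  represented as reals.\<close>
definition prim_sigma :: "('r::finite \<Rightarrow> int ^ 'n) \<Rightarrow> 'r set set \<Rightarrow> 'r set \<Rightarrow> 'r set" where
  "prim_sigma u F C = (THE S. S \<in> F \<and>
       (\<Sum>\<rho>\<in>C. realv (u \<rho>)) \<in> rel_interior (cone_gen u S))"

definition prim_q :: "('r::finite \<Rightarrow> int ^ 'n) \<Rightarrow> 'r set set \<Rightarrow> 'r set \<Rightarrow> 'r \<Rightarrow> real" where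
  "prim_q u F C = (THE q. (\<forall>\<rho>. \<rho> \<notin> prim_sigma u F C \<longrightarrow> q \<rho> = 0) \<and>
       (\<forall>\<rho>\<in>prim_sigma u F C. q \<rho> \<ge> 0) \<and>
       (\<Sum>\<rho>\<in>C. realv (u \<rho>)) = (\<Sum>\<rho>\<in>prim_sigma u F C. q \<rho> *\<^sub>R realv (u \<rho>)))"

definition prim_relation :: "('r::finite \<Rightarrow> int ^ 'n) \<Rightarrow> 'r set set \<Rightarrow> 'r set \<Rightarrow> 'r \<Rightarrow> real" where
  "prim_relation u F C = (\<lambda>\<rho>. (if \<rho> \<in> C then 1 else 0) - prim_q u F C \<rho>)"

end

theory Submission
  imports Defs
begin

text \<open>Let \<open>v\<close> be the sum of the \<open>u\<^sub>\<rho>\<close> for \<open>\<rho> \<in> C\<close>. Since the fan is complete, \<open>v\<close> lies in a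
  full-dimensional cone \<open>\<tau>\<close>, and in the relative interior of some face \<open>\<sigma> \<subseteq> \<tau>\<close>. By conic Caratheodory,
  \<open>v = \<Sum> c\<^sub>\<rho> u\<^sub>\<rho>\<close> with \<open>c \<ge> 0\<close> supported on linearly independent rays of \<open>\<sigma>\<close> (all of \<open>\<sigma>\<close>
  when \<open>\<sigma>\<close> is simplicial, and then \<open>c\<close> is the \<open>q\<close> of the primitive relation); the \<open>c\<^sub>\<rho>\<close>
  are rational. Clearing denominators, \<open>\<lambda> = k (c - \<one>\<^sub>C)\<close> is a one-parameter subgroup. It is
  nonnegative off \<open>C\<close>, so the limit exists on \<open>V(x\<^sub>\<rho> : \<rho> \<in> C)\<close>, and it equals \<open>-k \<one>\<^sub>C\<close> off \<open>\<tau>\<close>.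
  As \<open>C \<nsubseteq> \<tau>\<close>, strict convexity of the support function of an ample divisor on the
  maximal cone \<open>\<tau>\<close> gives \<open>\<langle>\<chi>\<^sub>D, \<lambda>\<rangle> < 0\<close>.\<close>

lemma realv_add: "realv (x + y) = realv x + realv y"
  by (simp add: realv_def vec_eq_iff)

lemma realv_zero [simp]: "realv 0 = 0"
  by (simp add: realv_def vec_eq_iff)

lemma realv_smult: "realv (k *s x) = real_of_int k *\<^sub>R realv x"
  by (simp add: realv_def vec_eq_iff)

lemma realv_sum: "realv (\<Sum>i\<in>S. g i) = (\<Sum>i\<in>S. realv (g i))"
  by (induction S rule: infinite_finite_induct) (auto simp: realv_add)

lemma realv_eq_iff [simp]: "realv x = realv y \<longleftrightarrow> x = y"
  by (simp add: realv_def vec_eq_iff)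

lemma realv_nth_Rats: "realv x $ i \<in> \<rat>"
  by (simp add: realv_def)

lemma ipair_sum_right: "ipair m (\<Sum>\<rho>\<in>A. b \<rho> *s w \<rho>) = (\<Sum>\<rho>\<in>A. b \<rho> * ipair m (w \<rho>))"
  by (simp add: ipair_def sum_distrib_left algebra_simps sum.swap[of _ A])

lemma one_param_iff_real:
  "one_param u b \<longleftrightarrow> (\<Sum>\<rho>\<in>UNIV. real_of_int (b \<rho>) *\<^sub>R realv (u \<rho>)) = 0"
proof -
  have "realv (\<Sum>\<rho>\<in>UNIV. b \<rho> *s u \<rho>) = (\<Sum>\<rho>\<in>UNIV. real_of_int (b \<rho>) *\<^sub>R realv (u \<rho>))"
    by (simp add: realv_sum realv_smult)
  then show ?thesis
    unfolding one_param_def by (metis realv_eq_iff realv_zero)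
qed

lemma cone_gen_eq_convex_cone_hull:
  fixes u :: "'r::finite \<Rightarrow> int ^ 'n"
  shows "cone_gen u S = convex_cone hull ((\<lambda>\<rho>. realv (u \<rho>)) ` S)"
proof
  show "cone_gen u S \<subseteq> convex_cone hull ((\<lambda>\<rho>. realv (u \<rho>)) ` S)"
  proof
    fix x assume "x \<in> cone_gen u S"
    then obtain c where c: "\<forall>\<rho>\<in>S. c \<rho> \<ge> 0" "x = (\<Sum>\<rho>\<in>S. c \<rho> *\<^sub>R realv (u \<rho>))"
      by (auto simp: cone_gen_def)
    have "(\<Sum>\<rho>\<in>T. c \<rho> *\<^sub>R realv (u \<rho>)) \<in> convex_cone hull ((\<lambda>\<rho>. realv (u \<rho>)) ` S)"
      if "T \<subseteq> S" for T
      using that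
    proof (induction T rule: infinite_finite_induct)
      case (insert \<rho> T)
      then show ?case
        using c(1) by (simp add: convex_cone_hull_add convex_cone_hull_mul hull_inc)
    qed (simp_all add: convex_cone_hull_contains_0)
    then show "x \<in> convex_cone hull ((\<lambda>\<rho>. realv (u \<rho>)) ` S)"
      using c(2) by blast
  qed
next
  have "convex_cone (cone_gen u S)"
    unfolding convex_cone_iff
  proof (intro conjI ballI allI impI)
    show "0 \<in> cone_gen u S"
      unfolding cone_gen_def by (intro CollectI exI[of _ "\<lambda>_. 0"]) simp
  next
    fix x y assume "x \<in> cone_gen u S" "y \<in> cone_gen u S"
    then obtain c d where "\<forall>\<rho>\<in>S. c \<rho> \<ge> 0" "x = (\<Sum>\<rho>\<in>S. c \<rho> *\<^sub>R realv (u \<rho>))"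
       "\<forall>\<rho>\<in>S. d \<rho> \<ge> 0" "y = (\<Sum>\<rho>\<in>S. d \<rho> *\<^sub>R realv (u \<rho>))"
      by (auto simp: cone_gen_def)
    then show "x + y \<in> cone_gen u S"
      unfolding cone_gen_def
      by (intro CollectI exI[of _ "\<lambda>\<rho>. c \<rho> + d \<rho>"]) (auto simp: sum.distrib scaleR_add_left)
  next
    fix x and t :: real assume "x \<in> cone_gen u S" "0 \<le> t"
    then obtain c where "\<forall>\<rho>\<in>S. c \<rho> \<ge> 0" "x = (\<Sum>\<rho>\<in>S. c \<rho> *\<^sub>R realv (u \<rho>))"
      by (auto simp: cone_gen_def)
    with \<open>0 \<le> t\<close> show "t *\<^sub>R x \<in> cone_gen u S"
      unfolding cone_gen_def
      by (intro CollectI exI[of _ "\<lambda>\<rho>. t * c \<rho>"]) (auto simp: scaleR_sum_right)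
  qed
  moreover have "realv (u \<rho>) \<in> cone_gen u S" if "\<rho> \<in> S" for \<rho>
    unfolding cone_gen_def
    by (intro CollectI exI[of _ "\<lambda>\<sigma>. if \<sigma> = \<rho> then 1 else 0"])
      (simp add: that if_distrib[of "\<lambda>t. t *\<^sub>R _"] cong: if_cong)
  ultimately show "convex_cone hull ((\<lambda>\<rho>. realv (u \<rho>)) ` S) \<subseteq> cone_gen u S"
    by (intro hull_minimal) auto
qed

lemma closed_cone_gen: "closed (cone_gen (u :: 'r::finite \<Rightarrow> int ^ 'n) S)"
  by (simp add: cone_gen_eq_convex_cone_hull closed_convex_cone_hull)

lemma convex_cone_gen: "convex (cone_gen (u :: 'r::finite \<Rightarrow> int ^ 'n) S)"
  by (simp add: cone_gen_eq_convex_cone_hull convex_convex_cone_hull)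

text \<open>A face of minimal dimension among those containing \<open>x\<close> has \<open>x\<close> in its relative
  interior: otherwise a supporting hyperplane at \<open>x\<close> cuts out a smaller face.\<close>
lemma exists_face_rel_interior:
  fixes K :: "'a::euclidean_space set"
  assumes "convex K" "x \<in> K"
  obtains L where "L face_of K" "x \<in> rel_interior L"
proof -
  obtain L where L: "L face_of K" "x \<in> L"
    and min: "\<forall>L'. L' face_of K \<and> x \<in> L' \<longrightarrow> nat (aff_dim L + 1) \<le> nat (aff_dim L' + 1)"
    using ex_has_least_nat[of "\<lambda>L. L face_of K \<and> x \<in> L" K "\<lambda>L. nat (aff_dim L + 1)"]
      face_of_refl[OF assms(1)] assms(2) by blast
  have "x \<in> rel_interior L"
  proof (rule ccontr)
    assume x: "x \<notin> rel_interior L"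
    have "convex L" using L(1) face_of_imp_convex by blast
    moreover have "x \<in> closure L" using L(2) closure_subset by blast
    ultimately obtain a where "a \<noteq> 0" and ge: "\<And>y. y \<in> closure L \<Longrightarrow> a \<bullet> x \<le> a \<bullet> y"
      and gt: "\<And>y. y \<in> rel_interior L \<Longrightarrow> a \<bullet> x < a \<bullet> y"
      using supporting_hyperplane_relative_frontier x by metis
    define L' where "L' = L \<inter> {y. a \<bullet> y = a \<bullet> x}"
    have "L' face_of L"
      unfolding L'_def using \<open>convex L\<close> ge closure_subset
      by (intro face_of_Int_supporting_hyperplane_ge) auto
    obtain y where y: "y \<in> rel_interior L"
      using \<open>convex L\<close> L(2) rel_interior_eq_empty by blast
    then have "y \<in> L" "y \<notin> L'"
      using gt[OF y] rel_interior_subset by (auto simp: L'_def)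
    then have "L' \<noteq> L" by blast
    then have "aff_dim L' < aff_dim L"
      using face_of_aff_dim_lt \<open>convex L\<close> \<open>L' face_of L\<close> by blast
    moreover have "nat (aff_dim L + 1) \<le> nat (aff_dim L' + 1)"
      using min face_of_trans[OF \<open>L' face_of L\<close> L(1)] L(2) by (simp add: L'_def)
    ultimately show False
      using aff_dim_geq[of L'] by linarith
  qed
  with L(1) show thesis using that by blast
qed

lemma interior_Union_closed_eq_empty:
  fixes \<A> :: "'a::topological_space set set"
  assumes "finite \<A>" "\<And>A. A \<in> \<A> \<Longrightarrow> closed A \<and> interior A = {}"
  shows "interior (\<Union>\<A>) = {}"
  using assms
  by (induction \<A> rule: finite_induct) (simp_all add: interior_closed_Un_empty_interior)

text \<open>Of a finite closed cover of the whole space, the members with nonempty interior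
  already cover it: their union is closed, and the rest has empty interior.\<close>
lemma closed_cover_nonempty_interior:
  fixes \<A> :: "'a::topological_space set set"
  assumes "finite \<A>" "\<And>A. A \<in> \<A> \<Longrightarrow> closed A" "\<Union>\<A> = UNIV"
  obtains A where "A \<in> \<A>" "interior A \<noteq> {}" "y \<in> A"
proof -
  define U where "U = \<Union>{A\<in>\<A>. interior A \<noteq> {}}"
  have "closed U"
    unfolding U_def using assms(1,2) by (intro closed_Union) auto
  moreover have "interior (\<Union>{A\<in>\<A>. interior A = {}}) = {}"
    using assms(1,2) by (intro interior_Union_closed_eq_empty) auto
  moreover have "U \<union> \<Union>{A\<in>\<A>. interior A = {}} = UNIV"
    using assms(3) unfolding U_def by blast
  ultimately have "interior U = UNIV"
    by (metis interior_UNIV interior_closed_Un_empty_interior)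
  then have "y \<in> U" using interior_subset by blast
  then show thesis using that by (auto simp: U_def)
qed

lemma independent_image_sum_eq_0_imp:
  fixes w :: "'i \<Rightarrow> 'a::real_vector"
  assumes "finite W" "inj_on w W" "independent (w ` W)" "(\<Sum>\<rho>\<in>W. e \<rho> *\<^sub>R w \<rho>) = 0"
  shows "\<forall>\<rho>\<in>W. e \<rho> = 0"
proof -
  define h where "h = (\<lambda>x. e (the_inv_into W w x))"
  have "(\<Sum>x\<in>w ` W. h x *\<^sub>R x) = (\<Sum>\<rho>\<in>W. e \<rho> *\<^sub>R w \<rho>)"
    by (simp add: sum.reindex[OF assms(2)] h_def the_inv_into_f_f[OF assms(2)])
  then have "\<forall>x\<in>w ` W. h x = 0"
    using assms(1,3,4) real_vector.dependent_finite[of "w ` W"] by auto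
  then show ?thesis by (auto simp: h_def the_inv_into_f_f[OF assms(2)])
qed

lemma dependent_family_imp_nontrivial_relation:
  fixes f :: "'i \<Rightarrow> 'a::real_vector"
  assumes "finite S" "\<not> (inj_on f S \<and> independent (f ` S))"
  obtains e r where "(\<Sum>\<rho>\<in>S. e \<rho> *\<^sub>R f \<rho>) = 0" "r \<in> S" "e r > 0"
proof -
  obtain e r where e: "(\<Sum>\<rho>\<in>S. e \<rho> *\<^sub>R f \<rho>) = 0" "r \<in> S" "e r \<noteq> 0"
  proof (cases "inj_on f S")
    case False
    then obtain r1 r2 where r: "r1 \<in> S" "r2 \<in> S" "r1 \<noteq> r2" "f r1 = f r2"
      unfolding inj_on_def by blast
    define e where "e = (\<lambda>\<rho>. if \<rho> = r1 then 1 else if \<rho> = r2 then -1 else (0::real))"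
    have "(\<Sum>\<rho>\<in>S. e \<rho> *\<^sub>R f \<rho>) = (\<Sum>\<rho>\<in>S. (if \<rho> = r1 then f r1 else 0) - (if \<rho> = r2 then f r2 else 0))"
      using r by (intro sum.cong) (auto simp: e_def)
    also have "\<dots> = 0"
      using r assms(1) by (simp add: sum_subtractf)
    finally show thesis
      using that r(1) by (simp add: e_def)
  next
    case True
    with assms(2) obtain h where h: "\<exists>x\<in>f ` S. h x \<noteq> 0" "(\<Sum>x\<in>f ` S. h x *\<^sub>R x) = 0"
      using real_vector.dependent_finite[of "f ` S"] assms(1) by blast
    then show thesis
      using that[of "\<lambda>\<rho>. h (f \<rho>)"] by (auto simp: sum.reindex[OF True])
  qed
  show thesis
  proof (cases "e r > 0")
    case True
    with e that show thesis by blast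
  next
    case False
    with e show thesis
      using that[of "\<lambda>\<rho>. - e \<rho>" r] by (simp add: sum_negf)
  qed
qed

text \<open>Conic Caratheodory: shift the coefficients along a nontrivial relation until one of
  them vanishes, and recurse on the smaller family.\<close>
lemma conic_caratheodory:
  fixes f :: "'i \<Rightarrow> 'a::real_vector"
  assumes "finite S" "\<forall>\<rho>\<in>S. c \<rho> \<ge> 0" "v = (\<Sum>\<rho>\<in>S. c \<rho> *\<^sub>R f \<rho>)"
  obtains W d where "W \<subseteq> S" "inj_on f W" "independent (f ` W)" "\<forall>\<rho>\<in>W. d \<rho> \<ge> 0"
    "v = (\<Sum>\<rho>\<in>W. d \<rho> *\<^sub>R f \<rho>)"
  using assms
proof (induction "card S" arbitrary: S c rule: less_induct)
  case (less S c)
  show ?case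
  proof (cases "inj_on f S \<and> independent (f ` S)")
    case True
    then show ?thesis using less.prems by blast
  next
    case False
    then obtain e r where e: "(\<Sum>\<rho>\<in>S. e \<rho> *\<^sub>R f \<rho>) = 0" "r \<in> S" "e r > 0"
      using dependent_family_imp_nontrivial_relation less.prems(2) by blast
    define P where "P = {\<rho>\<in>S. e \<rho> > 0}"
    have "finite P" "P \<noteq> {}"
      using less.prems(2) e(2,3) by (auto simp: P_def)
    define t where "t = Min ((\<lambda>\<rho>. c \<rho> / e \<rho>) ` P)"
    have "t \<in> (\<lambda>\<rho>. c \<rho> / e \<rho>) ` P"
      unfolding t_def using \<open>finite P\<close> \<open>P \<noteq> {}\<close> by (intro Min_in) auto
    then obtain r0 where r0: "r0 \<in> P" "t = c r0 / e r0" by blast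
    have t_le: "t \<le> c \<rho> / e \<rho>" if "\<rho> \<in> P" for \<rho>
      unfolding t_def using \<open>finite P\<close> that by simp
    have "t \<ge> 0"
      using r0 less.prems(3) by (auto simp: P_def)
    define c' where "c' = (\<lambda>\<rho>. c \<rho> - t * e \<rho>)"
    have c'_nonneg: "c' \<rho> \<ge> 0" if "\<rho> \<in> S" for \<rho>
    proof (cases "e \<rho> > 0")
      case True
      then show ?thesis
        using t_le[of \<rho>] that by (simp add: c'_def P_def pos_le_divide_eq)
    next
      case False
      then have "t * e \<rho> \<le> 0"
        using \<open>t \<ge> 0\<close> by (simp add: mult_nonneg_nonpos)
      then show ?thesis
        using less.prems(3) that by (fastforce simp: c'_def)
    qed
    have "c' r0 = 0"
      using r0 by (auto simp: c'_def P_def)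
    have "v = (\<Sum>\<rho>\<in>S. c \<rho> *\<^sub>R f \<rho>) - t *\<^sub>R (\<Sum>\<rho>\<in>S. e \<rho> *\<^sub>R f \<rho>)"
      using e(1) less.prems(4) by simp
    also have "\<dots> = (\<Sum>\<rho>\<in>S. c' \<rho> *\<^sub>R f \<rho>)"
      by (simp add: c'_def scaleR_diff_left sum_subtractf scaleR_sum_right)
    also have "\<dots> = (\<Sum>\<rho>\<in>S - {r0}. c' \<rho> *\<^sub>R f \<rho>)"
      using \<open>c' r0 = 0\<close> r0(1) sum.remove[OF less.prems(2), of r0 "\<lambda>\<rho>. c' \<rho> *\<^sub>R f \<rho>"]
      by (simp add: P_def)
    finally have "v = (\<Sum>\<rho>\<in>S - {r0}. c' \<rho> *\<^sub>R f \<rho>)" .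
    moreover have "card (S - {r0}) < card S"
      using less.prems(2) r0(1) by (intro card_Diff1_less) (auto simp: P_def)
    ultimately show ?thesis
      using less.hyps[of "S - {r0}" c'] less.prems(1,2) c'_nonneg by blast
  qed
qed

text \<open>The coefficients are recovered by a \<open>\<rat>\<close>-linear map \<open>g : \<real> \<rightarrow> \<rat>\<close> fixing \<open>\<rat>\<close>: applying it
  to each coordinate gives a second representation with rational coefficients \<open>g \<circ> c\<close>,
  which by independence must be the original one.\<close>
lemma independent_rational_coeffs:
  fixes w :: "'i \<Rightarrow> real ^ 'n"
  assumes "finite W" "inj_on w W" "independent (w ` W)" "\<forall>\<rho>\<in>W. \<forall>i. w \<rho> $ i \<in> \<rat>"
    "\<forall>i. v $ i \<in> \<rat>" "v = (\<Sum>\<rho>\<in>W. c \<rho> *\<^sub>R w \<rho>)"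
  shows "\<forall>\<rho>\<in>W. c \<rho> \<in> \<rat>"
proof -
  interpret vp: vector_space_pair "\<lambda>(q::rat) (x::real). of_rat q * x" "(*) :: rat \<Rightarrow> rat \<Rightarrow> rat"
    by unfold_locales (auto simp: algebra_simps of_rat_add of_rat_mult)
  have "vp.vs1.independent {1::real}" by simp
  then obtain g where g: "Vector_Spaces.linear (\<lambda>(q::rat) (x::real). of_rat q * x) (*) g" "g 1 = 1"
    using vp.linear_independent_extend[of "{1}" "\<lambda>_. 1"] by auto
  have g_scale: "g (of_rat q * x) = q * g x" for q x
    using vp.linear_scale[OF g(1)] by simp
  have g_Rats: "of_rat (g r) = r" if r: "r \<in> \<rat>" for r
  proof -
    obtain q where "r = of_rat q" using r by (rule Rats_cases)
    then show ?thesis using g_scale[of q 1] g(2) by simp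
  qed
  define d where "d = (\<lambda>\<rho>. of_rat (g (c \<rho>)) :: real)"
  have "v $ i = (\<Sum>\<rho>\<in>W. d \<rho> * w \<rho> $ i)" for i
  proof -
    have g_term: "g (c \<rho> * w \<rho> $ i) = g (w \<rho> $ i) * g (c \<rho>)" if "\<rho> \<in> W" for \<rho>
    proof -
      have "w \<rho> $ i \<in> \<rat>" using assms(4) that by blast
      then obtain q where q: "w \<rho> $ i = of_rat q" by (rule Rats_cases)
      then have "g (w \<rho> $ i) = q"
        using g_Rats by (metis Rats_of_rat of_rat_eq_iff)
      then show ?thesis
        using g_scale[of q "c \<rho>"] q by (simp add: mult.commute)
    qed
    have "g (v $ i) = (\<Sum>\<rho>\<in>W. g (c \<rho> * w \<rho> $ i))"
      using assms(6) vp.linear_sum[OF g(1)] by simp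
    also have "\<dots> = (\<Sum>\<rho>\<in>W. g (w \<rho> $ i) * g (c \<rho>))"
      using g_term by (rule sum.cong[OF refl])
    finally have "g (v $ i) = (\<Sum>\<rho>\<in>W. g (w \<rho> $ i) * g (c \<rho>))" .
    then have "of_rat (g (v $ i)) = (\<Sum>\<rho>\<in>W. of_rat (g (w \<rho> $ i)) * of_rat (g (c \<rho>)) :: real)"
      by (simp add: of_rat_sum of_rat_mult)
    also have "\<dots> = (\<Sum>\<rho>\<in>W. d \<rho> * w \<rho> $ i)"
      using assms(4) g_Rats by (intro sum.cong) (auto simp: d_def)
    finally show ?thesis
      using g_Rats assms(5) by simp
  qed
  then have "v = (\<Sum>\<rho>\<in>W. d \<rho> *\<^sub>R w \<rho>)"
    by (simp add: vec_eq_iff)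
  then have "(\<Sum>\<rho>\<in>W. (c \<rho> - d \<rho>) *\<^sub>R w \<rho>) = 0"
    using assms(6) by (simp add: scaleR_diff_left sum_subtractf)
  then have "\<forall>\<rho>\<in>W. c \<rho> - d \<rho> = 0"
    by (rule independent_image_sum_eq_0_imp[OF assms(1-3)])
  then show ?thesis
    by (metis Rats_of_rat d_def eq_iff_diff_eq_0)
qed

lemma common_denominator:
  assumes "finite W" "\<forall>\<rho>\<in>W. c \<rho> \<in> \<rat>"
  obtains k :: nat where "k > 0" "\<forall>\<rho>\<in>W. real k * c \<rho> \<in> \<int>"
  using assms
proof (induction W arbitrary: thesis rule: finite_induct)
  case empty
  then show ?case by (metis empty_iff zero_less_one)
next
  case (insert r W)
  then obtain k :: nat where k: "k > 0" "\<forall>\<rho>\<in>W. real k * c \<rho> \<in> \<int>" by auto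
  obtain p q where pq: "q > 0" "c r = of_int p / of_int q"
    using insert.prems Rats_cases' by (metis insert_iff)
  have "real (k * nat q) * c \<rho> \<in> \<int>" if "\<rho> \<in> insert r W" for \<rho>
  proof (cases "\<rho> = r")
    case True
    then show ?thesis using pq by simp
  next
    case False
    then have "of_int q * (real k * c \<rho>) \<in> \<int>"
      using k(2) that by simp
    moreover have "real (k * nat q) * c \<rho> = of_int q * (real k * c \<rho>)"
      using pq(1) by simp
    ultimately show ?thesis by (simp only:)
  qed
  moreover have "k * nat q > 0" using k(1) pq(1) by simp
  ultimately show ?case using insert.prems(1) by blast
qed

lemma is_fan_face_cone:
  assumes "is_fan u F" "S \<in> F" "K face_of cone_gen u S" "K \<noteq> {}"
  obtains T where "T \<in> F" "T \<subseteq> S" "K = cone_gen u T"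
  using assms unfolding is_fan_def by metis

lemma is_fan_cone_gen_mono:
  assumes "is_fan u F" "S \<in> F" "T \<in> F" "cone_gen u T \<subseteq> cone_gen u S"
  shows "T \<subseteq> S"
  using assms unfolding is_fan_def by metis

lemma is_fan_Int_face:
  assumes "is_fan u F" "S \<in> F" "T \<in> F"
  shows "(cone_gen u S \<inter> cone_gen u T) face_of cone_gen u S"
  using assms unfolding is_fan_def by metis

lemma complete_fan_full_dim_cone:
  fixes u :: "'r::finite \<Rightarrow> int ^ 'n"
  assumes "complete_fan u F"
  obtains \<tau> where "\<tau> \<in> F" "interior (cone_gen u \<tau>) \<noteq> {}" "v \<in> cone_gen u \<tau>"
proof -
  have "finite (cone_gen u ` F)" "\<And>K. K \<in> cone_gen u ` F \<Longrightarrow> closed K"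
    "\<Union>(cone_gen u ` F) = UNIV"
    using assms by (auto simp: complete_fan_def closed_cone_gen)
  then obtain K where "K \<in> cone_gen u ` F" "interior K \<noteq> {}" "v \<in> K"
    by (rule closed_cover_nonempty_interior)
  then show thesis using that by blast
qed

lemma fan_face_rel_interior:
  fixes u :: "'r::finite \<Rightarrow> int ^ 'n"
  assumes "is_fan u F" "\<tau> \<in> F" "v \<in> cone_gen u \<tau>"
  obtains \<sigma> where "\<sigma> \<in> F" "\<sigma> \<subseteq> \<tau>" "v \<in> rel_interior (cone_gen u \<sigma>)"
proof -
  obtain L where L: "L face_of cone_gen u \<tau>" "v \<in> rel_interior L"
    using exists_face_rel_interior[OF convex_cone_gen assms(3)] .
  moreover have "L \<noteq> {}"
    using L(2) rel_interior_subset by blast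
  ultimately obtain \<sigma> where "\<sigma> \<in> F" "\<sigma> \<subseteq> \<tau>" "L = cone_gen u \<sigma>"
    using is_fan_face_cone assms(1,2) by metis
  then show thesis using that L(2) by blast
qed

text \<open>If \<open>v\<close> lies in the relative interior of \<open>cone_gen u S\<close> and in \<open>cone_gen u T\<close>, the
  common face \<open>cone_gen u S \<inter> cone_gen u T\<close> of \<open>cone_gen u S\<close> meets its relative interior,
  so it is all of \<open>cone_gen u S\<close>.\<close>
lemma fan_rel_interior_unique:
  fixes u :: "'r::finite \<Rightarrow> int ^ 'n"
  assumes "is_fan u F" "S \<in> F" "T \<in> F"
    "v \<in> rel_interior (cone_gen u S)" "v \<in> rel_interior (cone_gen u T)"
  shows "S = T"
proof -
  have "S1 \<subseteq> S2"
    if "S1 \<in> F" "S2 \<in> F" "v \<in> rel_interior (cone_gen u S1)" "v \<in> cone_gen u S2" for S1 S2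
  proof -
    have face: "(cone_gen u S1 \<inter> cone_gen u S2) face_of cone_gen u S1"
      using is_fan_Int_face assms(1) that(1,2) .
    have "v \<in> cone_gen u S1"
      using that(3) rel_interior_subset by blast
    then have "cone_gen u S1 \<subseteq> cone_gen u S2"
      using subset_of_face_of[OF face order.refl] that(3,4) by blast
    then show ?thesis
      using is_fan_cone_gen_mono assms(1) that(1,2) by blast
  qed
  then show ?thesis
    using assms(2-5) rel_interior_subset by (metis subset_antisym subsetD)
qed

lemma prim_sigma_eqI:
  fixes u :: "'r::finite \<Rightarrow> int ^ 'n"
  assumes "is_fan u F" "\<sigma> \<in> F" "(\<Sum>\<rho>\<in>C. realv (u \<rho>)) \<in> rel_interior (cone_gen u \<sigma>)"
  shows "prim_sigma u F C = \<sigma>"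
  unfolding prim_sigma_def
  using assms fan_rel_interior_unique by (intro the_equality) blast+

lemma prim_q_eqI:
  fixes u :: "'r::finite \<Rightarrow> int ^ 'n"
  assumes "prim_sigma u F C = \<sigma>"
    "inj_on (\<lambda>\<rho>. realv (u \<rho>)) \<sigma>" "independent ((\<lambda>\<rho>. realv (u \<rho>)) ` \<sigma>)"
    "\<And>\<rho>. c \<rho> \<ge> 0" "\<And>\<rho>. \<rho> \<notin> \<sigma> \<Longrightarrow> c \<rho> = 0"
    "(\<Sum>\<rho>\<in>C. realv (u \<rho>)) = (\<Sum>\<rho>\<in>\<sigma>. c \<rho> *\<^sub>R realv (u \<rho>))"
  shows "prim_q u F C = c"
  unfolding prim_q_def assms(1)
proof (rule the_equality)
  fix q
  assume q: "(\<forall>\<rho>. \<rho> \<notin> \<sigma> \<longrightarrow> q \<rho> = 0) \<and> (\<forall>\<rho>\<in>\<sigma>. 0 \<le> q \<rho>) \<and>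
    (\<Sum>\<rho>\<in>C. realv (u \<rho>)) = (\<Sum>\<rho>\<in>\<sigma>. q \<rho> *\<^sub>R realv (u \<rho>))"
  then have "(\<Sum>\<rho>\<in>\<sigma>. (q \<rho> - c \<rho>) *\<^sub>R realv (u \<rho>)) = 0"
    using assms(6) by (simp add: scaleR_diff_left sum_subtractf)
  then have "\<forall>\<rho>\<in>\<sigma>. q \<rho> - c \<rho> = 0"
    by (rule independent_image_sum_eq_0_imp[OF finite assms(2,3)])
  with q assms(5) show "q = c"
    by fastforce
qed (use assms(4-6) in blast)

lemma cone_gen_independent_representation:
  fixes u :: "'r::finite \<Rightarrow> int ^ 'n"
  assumes "v \<in> cone_gen u \<sigma>"
  obtains W c where "W \<subseteq> \<sigma>" "inj_on (\<lambda>\<rho>. realv (u \<rho>)) W"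
    "independent ((\<lambda>\<rho>. realv (u \<rho>)) ` W)" "\<And>\<rho>. c \<rho> \<ge> 0" "\<And>\<rho>. \<rho> \<notin> W \<Longrightarrow> c \<rho> = 0"
    "v = (\<Sum>\<rho>\<in>W. c \<rho> *\<^sub>R realv (u \<rho>))"
    "inj_on (\<lambda>\<rho>. realv (u \<rho>)) \<sigma> \<and> independent ((\<lambda>\<rho>. realv (u \<rho>)) ` \<sigma>) \<Longrightarrow> W = \<sigma>"
proof -
  obtain d where d: "\<forall>\<rho>\<in>\<sigma>. d \<rho> \<ge> 0" "v = (\<Sum>\<rho>\<in>\<sigma>. d \<rho> *\<^sub>R realv (u \<rho>))"
    using assms unfolding cone_gen_def by blast
  obtain W e where W: "W \<subseteq> \<sigma>" "inj_on (\<lambda>\<rho>. realv (u \<rho>)) W"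
    "independent ((\<lambda>\<rho>. realv (u \<rho>)) ` W)" "\<forall>\<rho>\<in>W. e \<rho> \<ge> 0"
    "v = (\<Sum>\<rho>\<in>W. e \<rho> *\<^sub>R realv (u \<rho>))"
    and W_eq: "inj_on (\<lambda>\<rho>. realv (u \<rho>)) \<sigma> \<and> independent ((\<lambda>\<rho>. realv (u \<rho>)) ` \<sigma>) \<Longrightarrow> W = \<sigma>"
  proof (cases "inj_on (\<lambda>\<rho>. realv (u \<rho>)) \<sigma> \<and> independent ((\<lambda>\<rho>. realv (u \<rho>)) ` \<sigma>)")
    case True
    then show thesis using that[of \<sigma> d] d by blast
  next
    case False
    obtain W e where "W \<subseteq> \<sigma>" "inj_on (\<lambda>\<rho>. realv (u \<rho>)) W"
      "independent ((\<lambda>\<rho>. realv (u \<rho>)) ` W)" "\<forall>\<rho>\<in>W. e \<rho> \<ge> 0"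
      "v = (\<Sum>\<rho>\<in>W. e \<rho> *\<^sub>R realv (u \<rho>))"
      using conic_caratheodory[OF finite d] .
    with False show thesis using that by blast
  qed
  define c where "c \<rho> = (if \<rho> \<in> W then e \<rho> else 0)" for \<rho>
  have "v = (\<Sum>\<rho>\<in>W. c \<rho> *\<^sub>R realv (u \<rho>))"
    using W(5) by (simp add: c_def)
  then show thesis
    using that[of W c] W W_eq by (auto simp: c_def)
qed

text \<open>The coefficients of an independent rational family are rational, so a common
  denominator \<open>k\<close> turns the relation \<open>\<Sum>\<^sub>C u\<^sub>\<rho> = \<Sum> c\<^sub>\<rho> u\<^sub>\<rho>\<close> into an integral one.\<close>
lemma cone_representation_integral_one_param:
  fixes u :: "'r::finite \<Rightarrow> int ^ 'n"
  assumes "inj_on (\<lambda>\<rho>. realv (u \<rho>)) W" "independent ((\<lambda>\<rho>. realv (u \<rho>)) ` W)"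
    "\<And>\<rho>. \<rho> \<notin> W \<Longrightarrow> c \<rho> = 0"
    "(\<Sum>\<rho>\<in>C. realv (u \<rho>)) = (\<Sum>\<rho>\<in>W. c \<rho> *\<^sub>R realv (u \<rho>))"
  obtains k b where "k > 0" "one_param u b"
    "\<forall>\<rho>. - real_of_int (b \<rho>) = real k * ((if \<rho> \<in> C then 1 else 0) - c \<rho>)"
proof -
  have "(\<Sum>\<rho>\<in>C. realv (u \<rho>)) $ i \<in> \<rat>" for i
    by (metis realv_sum realv_nth_Rats)
  then have "\<forall>\<rho>\<in>W. c \<rho> \<in> \<rat>"
    using independent_rational_coeffs[OF finite assms(1,2) _ _ assms(4)] realv_nth_Rats by blast
  then obtain k :: nat where k: "k > 0" "\<forall>\<rho>\<in>W. real k * c \<rho> \<in> \<int>"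
    by (rule common_denominator[OF finite])
  then have "\<forall>\<rho>. \<exists>n. real k * c \<rho> = of_int n"
    using assms(3) by (metis Ints_cases mult_zero_right of_int_0)
  then obtain e where e: "\<And>\<rho>. real k * c \<rho> = of_int (e \<rho>)"
    by metis
  define b where "b \<rho> = e \<rho> - (if \<rho> \<in> C then int k else 0)" for \<rho>
  have b: "- real_of_int (b \<rho>) = real k * ((if \<rho> \<in> C then 1 else 0) - c \<rho>)" for \<rho>
    by (simp add: b_def e[symmetric] algebra_simps)
  have "real_of_int (b \<rho>) *\<^sub>R realv (u \<rho>)
      = real k *\<^sub>R (c \<rho> *\<^sub>R realv (u \<rho>) - (if \<rho> \<in> C then realv (u \<rho>) else 0))" for \<rho>
    by (simp add: b_def e[symmetric] algebra_simps)
  then have "(\<Sum>\<rho>\<in>UNIV. real_of_int (b \<rho>) *\<^sub>R realv (u \<rho>))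
      = real k *\<^sub>R ((\<Sum>\<rho>\<in>UNIV. c \<rho> *\<^sub>R realv (u \<rho>))
          - (\<Sum>\<rho>\<in>UNIV. if \<rho> \<in> C then realv (u \<rho>) else 0))"
    by (simp add: sum_subtractf scaleR_sum_right scaleR_diff_right)
  also have "(\<Sum>\<rho>\<in>UNIV. if \<rho> \<in> C then realv (u \<rho>) else 0) = (\<Sum>\<rho>\<in>C. realv (u \<rho>))"
    by (simp add: sum.inter_restrict[symmetric])
  also have "(\<Sum>\<rho>\<in>UNIV. c \<rho> *\<^sub>R realv (u \<rho>)) = (\<Sum>\<rho>\<in>C. realv (u \<rho>))"
    using assms(3,4) by (simp add: sum.mono_neutral_right[of UNIV W])
  finally have "one_param u b"
    by (simp add: one_param_iff_real)
  with k(1) b show thesis using that by blast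
qed

lemma ops_act_has_limit_at_0:
  assumes "\<And>\<rho>. x \<rho> \<noteq> 0 \<Longrightarrow> b \<rho> \<ge> 0"
  shows "\<exists>l. ((\<lambda>t. ops_act b t x) \<longlongrightarrow> l) (at 0)"
proof -
  define g where "g t = (\<lambda>\<rho>. t ^ nat (b \<rho>) * x \<rho>)" for t :: complex
  have "ops_act b t x = g t" for t
    using assms by (force simp: ops_act_def g_def fun_eq_iff power_int_def)
  moreover have "continuous_on UNIV g"
    unfolding g_def by (intro continuous_on_coordinatewise_then_product continuous_intros)
  then have "(g \<longlongrightarrow> g 0) (at 0)"
    by (simp add: continuous_on_eq_continuous_at isCont_def)
  ultimately show ?thesis by auto
qed

text \<open>Write \<open>a\<^sub>\<rho> = s\<^sub>\<rho> - \<langle>m\<^sub>\<tau>, u\<^sub>\<rho>\<rangle>\<close>: the linear part pairs to zero with any one-parameter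
  subgroup, while \<open>s\<close> vanishes on \<open>\<tau>\<close> and is positive off \<open>\<tau>\<close>.\<close>
lemma ample_char_pair_neg:
  fixes u :: "'r::finite \<Rightarrow> int ^ 'n"
  assumes "ample u F a" "\<tau> \<in> F" "interior (cone_gen u \<tau>) \<noteq> {}" "one_param u b"
    "\<And>\<rho>. \<rho> \<notin> \<tau> \<Longrightarrow> b \<rho> \<le> 0" "\<rho>0 \<notin> \<tau>" "b \<rho>0 < 0"
  shows "char_pair a b < 0"
proof -
  obtain m where m_eq: "\<forall>\<rho>\<in>\<tau>. ipair m (u \<rho>) = - a \<rho>"
    and m_gt: "\<forall>\<rho>. \<rho> \<notin> \<tau> \<longrightarrow> ipair m (u \<rho>) > - a \<rho>"
    using assms(1-3) unfolding ample_def by blast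
  define s where "s \<rho> = a \<rho> + ipair m (u \<rho>)" for \<rho>
  have "(\<Sum>\<rho>\<in>UNIV. b \<rho> * ipair m (u \<rho>)) = 0"
    using assms(4) ipair_sum_right[where A = UNIV and b = b and w = u] by (simp add: one_param_def ipair_def)
  then have "char_pair a b = (\<Sum>\<rho>\<in>UNIV. s \<rho> * b \<rho>)"
    by (simp add: char_pair_def s_def algebra_simps sum.distrib)
  also have "\<dots> < 0"
  proof -
    have s_pos: "s \<rho> > 0" if "\<rho> \<notin> \<tau>" for \<rho>
      using m_gt that unfolding s_def by force
    have "\<forall>\<rho>\<in>UNIV. s \<rho> * b \<rho> \<le> 0"
    proof
      fix \<rho>
      show "s \<rho> * b \<rho> \<le> 0"
      proof (cases "\<rho> \<in> \<tau>")
        case True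
        then show ?thesis using m_eq by (simp add: s_def)
      next
        case False
        then show ?thesis using s_pos assms(5) by (simp add: mult_nonneg_nonpos less_imp_le)
      qed
    qed
    moreover have "\<exists>\<rho>\<in>UNIV. s \<rho> * b \<rho> < 0"
      using s_pos[OF assms(6)] assms(7) by (meson UNIV_I mult_pos_neg)
    ultimately show ?thesis
      using sum_strict_mono_ex1[of UNIV "\<lambda>\<rho>. s \<rho> * b \<rho>" "\<lambda>_. 0"] by simp
  qed
  finally show ?thesis by simp
qed

lemma prim_relation_eqI:
  fixes u :: "'r::finite \<Rightarrow> int ^ 'n"
  assumes "is_fan u F" "\<sigma> \<in> F"
    "inj_on (\<lambda>\<rho>. realv (u \<rho>)) \<sigma>" "independent ((\<lambda>\<rho>. realv (u \<rho>)) ` \<sigma>)"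
    "\<And>\<rho>. c \<rho> \<ge> 0" "\<And>\<rho>. \<rho> \<notin> \<sigma> \<Longrightarrow> c \<rho> = 0"
    "(\<Sum>\<rho>\<in>C. realv (u \<rho>)) \<in> rel_interior (cone_gen u \<sigma>)"
    "(\<Sum>\<rho>\<in>C. realv (u \<rho>)) = (\<Sum>\<rho>\<in>\<sigma>. c \<rho> *\<^sub>R realv (u \<rho>))"
  shows "prim_relation u F C \<rho> = (if \<rho> \<in> C then 1 else 0) - c \<rho>"
  using prim_q_eqI[OF prim_sigma_eqI[OF assms(1,2,7)] assms(3-6,8)]
  by (simp add: prim_relation_def)

lemma exists_destabilizing_one_param:
  fixes u :: "'r::finite \<Rightarrow> int ^ 'n"
  assumes "\<tau> \<in> F" "interior (cone_gen u \<tau>) \<noteq> {}" "\<not> C \<subseteq> \<tau>" "W \<subseteq> \<tau>"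
    "inj_on (\<lambda>\<rho>. realv (u \<rho>)) W" "independent ((\<lambda>\<rho>. realv (u \<rho>)) ` W)"
    "\<And>\<rho>. c \<rho> \<ge> 0" "\<And>\<rho>. \<rho> \<notin> W \<Longrightarrow> c \<rho> = 0"
    "(\<Sum>\<rho>\<in>C. realv (u \<rho>)) = (\<Sum>\<rho>\<in>W. c \<rho> *\<^sub>R realv (u \<rho>))"
  obtains k b where "k > 0" "one_param u b"
    "\<forall>\<rho>. - real_of_int (b \<rho>) = real k * ((if \<rho> \<in> C then 1 else 0) - c \<rho>)"
    "\<forall>x. (\<forall>\<rho>\<in>C. x \<rho> = 0) \<longrightarrow> (\<exists>l. ((\<lambda>t. ops_act b t x) \<longlongrightarrow> l) (at 0))"
    "\<forall>a. ample u F a \<longrightarrow> char_pair a b < 0"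
proof -
  obtain k b where b: "k > 0" "one_param u b"
      "\<forall>\<rho>. - real_of_int (b \<rho>) = real k * ((if \<rho> \<in> C then 1 else 0) - c \<rho>)"
    using cone_representation_integral_one_param[OF assms(5,6,8,9)] .
  have b_nonneg: "b \<rho> \<ge> 0" if "\<rho> \<notin> C" for \<rho>
  proof -
    have "real_of_int (b \<rho>) = real k * c \<rho>"
      using b(3)[rule_format, of \<rho>] that by simp
    then show ?thesis
      using assms(7)[of \<rho>] by (metis of_int_0_le_iff of_nat_0_le_iff mult_nonneg_nonneg)
  qed
  have b_off_\<tau>: "real_of_int (b \<rho>) = - (if \<rho> \<in> C then real k else 0)" if "\<rho> \<notin> \<tau>" for \<rho>
  proof -
    have "c \<rho> = 0"
      using assms(4,8) that by blast
    then show ?thesis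
      using b(3)[rule_format, of \<rho>] by (cases "\<rho> \<in> C") simp_all
  qed
  have b_nonpos: "b \<rho> \<le> 0" if "\<rho> \<notin> \<tau>" for \<rho>
  proof -
    have "real_of_int (b \<rho>) \<le> 0" using b_off_\<tau>[OF that] by simp
    then show ?thesis by simp
  qed
  obtain \<rho>0 where "\<rho>0 \<in> C" "\<rho>0 \<notin> \<tau>"
    using assms(3) by blast
  then have "real_of_int (b \<rho>0) < 0"
    using b_off_\<tau> b(1) by simp
  then have "\<forall>a. ample u F a \<longrightarrow> char_pair a b < 0"
    using ample_char_pair_neg[OF _ assms(1,2) b(2) b_nonpos \<open>\<rho>0 \<notin> \<tau>\<close>] by simp
  moreover have "\<forall>x. (\<forall>\<rho>\<in>C. x \<rho> = 0) \<longrightarrow> (\<exists>l. ((\<lambda>t. ops_act b t x) \<longlongrightarrow> l) (at 0))"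
    using b_nonneg by (auto intro: ops_act_has_limit_at_0)
  ultimately show thesis
    using that b by blast
qed

theorem theoremB:
  fixes u :: "'r::finite \<Rightarrow> int ^ 'n" and F :: "'r set set" and C :: "'r set"
  assumes "projective_fan u F"
    and "primitive_collection F C"
  shows "\<exists>b. one_param u b \<and>
     (\<forall>x :: 'r \<Rightarrow> complex. (\<forall>\<rho>\<in>C. x \<rho> = 0) \<longrightarrow>
         (\<exists>l. ((\<lambda>t. ops_act b t x) \<longlongrightarrow> l) (at (0::complex)))) \<and>
     (\<forall>a. ample u F a \<longrightarrow> char_pair a b < 0) \<and>
     (simplicial_fan u F \<longrightarrow>
        (\<exists>k::nat. k > 0 \<and> (\<forall>\<rho>. - real_of_int (b \<rho>) = real k * prim_relation u F C \<rho>)))"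
proof -
  have fan: "is_fan u F" and complete: "complete_fan u F"
    using assms(1) by (auto simp: projective_fan_def complete_fan_def)
  define v where "v = (\<Sum>\<rho>\<in>C. realv (u \<rho>))"
  obtain \<tau> where \<tau>: "\<tau> \<in> F" "interior (cone_gen u \<tau>) \<noteq> {}" "v \<in> cone_gen u \<tau>"
    using complete_fan_full_dim_cone[OF complete] .
  obtain \<sigma> where \<sigma>: "\<sigma> \<in> F" "\<sigma> \<subseteq> \<tau>" "v \<in> rel_interior (cone_gen u \<sigma>)"
    using fan_face_rel_interior[OF fan \<tau>(1,3)] .
  obtain W c where W: "W \<subseteq> \<sigma>" "inj_on (\<lambda>\<rho>. realv (u \<rho>)) W"
      "independent ((\<lambda>\<rho>. realv (u \<rho>)) ` W)" "\<And>\<rho>. c \<rho> \<ge> 0" "\<And>\<rho>. \<rho> \<notin> W \<Longrightarrow> c \<rho> = 0"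
      "v = (\<Sum>\<rho>\<in>W. c \<rho> *\<^sub>R realv (u \<rho>))"
    and W_eq: "inj_on (\<lambda>\<rho>. realv (u \<rho>)) \<sigma> \<and> independent ((\<lambda>\<rho>. realv (u \<rho>)) ` \<sigma>) \<Longrightarrow> W = \<sigma>"
    using cone_gen_independent_representation[of v u \<sigma>] \<sigma>(3) rel_interior_subset by blast
  have "\<not> C \<subseteq> \<tau>"
    using assms(2) \<tau>(1) unfolding primitive_collection_def by blast
  then obtain k b where b: "k > 0" "one_param u b"
      "\<forall>\<rho>. - real_of_int (b \<rho>) = real k * ((if \<rho> \<in> C then 1 else 0) - c \<rho>)"
      "\<forall>x. (\<forall>\<rho>\<in>C. x \<rho> = 0) \<longrightarrow> (\<exists>l. ((\<lambda>t. ops_act b t x) \<longlongrightarrow> l) (at 0))"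
      "\<forall>a. ample u F a \<longrightarrow> char_pair a b < 0"
    using exists_destabilizing_one_param[OF \<tau>(1,2) _ _ W(2-5) W(6)[unfolded v_def]] W(1) \<sigma>(2)
    by blast
  have "prim_relation u F C \<rho> = (if \<rho> \<in> C then 1 else 0) - c \<rho>" if "simplicial_fan u F" for \<rho>
  proof -
    have "inj_on (\<lambda>\<rho>. realv (u \<rho>)) \<sigma>" "independent ((\<lambda>\<rho>. realv (u \<rho>)) ` \<sigma>)"
      using that \<sigma>(1) unfolding simplicial_fan_def by blast+
    with W W_eq show ?thesis
      using prim_relation_eqI[OF fan \<sigma>(1)] \<sigma>(3) by (simp add: v_def)
  qed
  with b show ?thesis
    by (intro exI[of _ b] conjI impI exI[of _ k]) auto
qed

end
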